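(* For any $\alpha>0$ and $\epsilon>0$, there is no $\epsilon$-differentially private (central model) $(\alpha, 0.01m^2)$-approximation algorithm for rank aggregation when $n=o(m/\epsilon)$.
   Context: Items are $[m]=\{1,\dots,m\}$; $\mathbb{S}_m$ is the set of rankings (permutations) of $[m]$, $\pi(j)$ being the position of item $j$. The Kendall tau distance is $K(\pi_1,\pi_2)=|\{(i,j):\pi_1(i)<\pi_1(j),\ \pi_2(i)>\pi_2(j)\}|$. An input is a list $\Pi=\{\pi_1,\dots,\pi_n\}$ of $n$ rankings. Define $\bar K(\sigma,\Pi)=\frac1n\sum_k K(\sigma,\pi_k)$ and $\mathrm{OPT}(\Pi)=\min_\sigma\bar K(\sigma,\Pi)$. A randomized algorithm is an $(\alpha,\beta)$-approximation algorithm if for every input $\Pi$ its output $\sigma$ satisfies $\mathbb{E}[\bar K(\sigma,\Pi)]\le\alpha\,\mathrm{OPT}(\Pi)+\beta$. Two inputs are neighboring if they differ in a single ranking; an algorithm $\mathcal{M}$ is $\epsilon$-DP (central model) if for all neighboring $\Pi,\Pi'$ and all output sets $S$, $\Pr[\mathcal{M}(\Pi)\in S]\le e^{\epsilon}\Pr[\mathcal{M}(\Pi')\in S]$. *)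

theory Defs
  imports "HOL-Probability.Probability" "HOL-Combinatorics.Permutations"
begin

text \<open>A ranking of the items [m] = {1..m} is a permutation pi of {1..m};
  pi j is the position of item j (identity outside {1..m}).\<close>
definition rankings :: "nat \<Rightarrow> (nat \<Rightarrow> nat) set" where
  "rankings m = {\<pi>. \<pi> permutes {1..m}}"

definition kendall :: "nat \<Rightarrow> (nat \<Rightarrow> nat) \<Rightarrow> (nat \<Rightarrow> nat) \<Rightarrow> nat" where
  "kendall m \<pi>1 \<pi>2 =
     card {(i, j). i \<in> {1..m} \<and> j \<in> {1..m} \<and> \<pi>1 i < \<pi>1 j \<and> \<pi>2 i > \<pi>2 j}"

definition avg_kendall :: "nat \<Rightarrow> (nat \<Rightarrow> nat) \<Rightarrow> (nat \<Rightarrow> nat) list \<Rightarrow> real" where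
  "avg_kendall m \<sigma> Ps = (\<Sum>\<pi>\<leftarrow>Ps. real (kendall m \<sigma> \<pi>)) / real (length Ps)"

definition OPT :: "nat \<Rightarrow> (nat \<Rightarrow> nat) list \<Rightarrow> real" where
  "OPT m Ps = Min ((\<lambda>\<sigma>. avg_kendall m \<sigma> Ps) ` rankings m)"

definition valid_input :: "nat \<Rightarrow> nat \<Rightarrow> (nat \<Rightarrow> nat) list \<Rightarrow> bool" where
  "valid_input m n Ps \<longleftrightarrow> length Ps = n \<and> set Ps \<subseteq> rankings m"

definition neighboring :: "(nat \<Rightarrow> nat) list \<Rightarrow> (nat \<Rightarrow> nat) list \<Rightarrow> bool" where
  "neighboring Ps Ps' \<longleftrightarrow> length Ps = length Ps' \<and>
     card {k. k < length Ps \<and> Ps ! k \<noteq> Ps' ! k} \<le> 1"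

definition is_DP :: "nat \<Rightarrow> nat \<Rightarrow> real \<Rightarrow> ((nat \<Rightarrow> nat) list \<Rightarrow> (nat \<Rightarrow> nat) pmf) \<Rightarrow> bool" where
  "is_DP m n \<epsilon> A \<longleftrightarrow>
     (\<forall>Ps Ps'. valid_input m n Ps \<and> valid_input m n Ps' \<and> neighboring Ps Ps' \<longrightarrow>
        (\<forall>S. measure_pmf.prob (A Ps) S \<le> exp \<epsilon> * measure_pmf.prob (A Ps') S))"

definition is_approx :: "nat \<Rightarrow> nat \<Rightarrow> real \<Rightarrow> real \<Rightarrow> ((nat \<Rightarrow> nat) list \<Rightarrow> (nat \<Rightarrow> nat) pmf) \<Rightarrow> bool" where
  "is_approx m n \<alpha> \<beta> A \<longleftrightarrow>
     (\<forall>Ps. valid_input m n Ps \<longrightarrow>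
        set_pmf (A Ps) \<subseteq> rankings m \<and>
        measure_pmf.expectation (A Ps) (\<lambda>\<sigma>. avg_kendall m \<sigma> Ps) \<le> \<alpha> * OPT m Ps + \<beta>)"

end

theory Submission
  imports Defs
begin

(* A packing argument. For S a subset of {1..m div 2}, the planted ranking pi_S ranks the items
   of S behind the second half {m div 2 + 1..m} and the other first-half items ahead of it. On
   the unanimous input of n copies of pi_S we have OPT = 0, and Markov's
   inequality puts the output within Kendall distance 0.02 m^2 of pi_S with probability at least
   1/2; by group privacy this event still has probability at least exp (-n eps) / 2 on the
   unanimous input of the identity. A ranking at distance d from pi_S determines S up to a
   symmetric difference of at most 4 d / m items, so every ranking lies in at most
   3^(0.08 m) (4/3)^(m div 2) of the 2^(m div 2) events. Hence
   2^(m div 2) / 2 <= exp (n eps) 3^(0.08 m) (4/3)^(m div 2), i.e. n eps >= m / 40 - 2,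
   which fails once n = o(m / eps). *)

lemma finite_rankings: "finite (rankings m)"
  unfolding rankings_def by (rule finite_permutations) simp

lemma id_in_rankings: "id \<in> rankings m"
  unfolding rankings_def by (simp add: permutes_id)

lemma inj_of_in_rankings: "\<sigma> \<in> rankings m \<Longrightarrow> inj \<sigma>"
  unfolding rankings_def by (auto intro: permutes_inj)

lemma kendall_self: "kendall m \<pi> \<pi> = 0"
  unfolding kendall_def by (auto simp: card_eq_0_iff)

lemma avg_kendall_replicate:
  "n \<ge> 1 \<Longrightarrow> avg_kendall m \<sigma> (replicate n \<pi>) = real (kendall m \<sigma> \<pi>)"
  unfolding avg_kendall_def by (simp add: sum_list_replicate)

lemma OPT_replicate:
  assumes "n \<ge> 1" "\<pi> \<in> rankings m"
  shows "OPT m (replicate n \<pi>) = 0"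
  unfolding OPT_def avg_kendall_replicate[OF assms(1)]
proof (rule Min_eqI)
  show "0 \<in> (\<lambda>\<sigma>. real (kendall m \<sigma> \<pi>)) ` rankings m"
    using assms(2) by (intro image_eqI[where x=\<pi>]) (simp_all add: kendall_self)
qed (use finite_rankings in auto)

lemma approx_concentrates_near_unanimous_input:
  assumes approx: "is_approx m n \<alpha> (0.01 * real m ^ 2) A"
    and "n \<ge> 1" "\<pi> \<in> rankings m" "m \<ge> 1"
  shows "1/2 \<le> measure_pmf.prob (A (replicate n \<pi>)) {\<sigma>. real (kendall m \<sigma> \<pi>) \<le> 0.02 * real m ^ 2}"
proof -
  define M where "M = A (replicate n \<pi>)"
  define d :: real where "d = 0.02 * real m ^ 2"
  have "d > 0" using \<open>m \<ge> 1\<close> by (simp add: d_def)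
  have "valid_input m n (replicate n \<pi>)"
    using \<open>\<pi> \<in> rankings m\<close> by (simp add: valid_input_def set_replicate_conv_if)
  with approx have "set_pmf M \<subseteq> rankings m"
    and expectation: "measure_pmf.expectation M (\<lambda>\<sigma>. real (kendall m \<sigma> \<pi>)) \<le> d / 2"
    using assms(2,3) by (auto simp: is_approx_def M_def d_def avg_kendall_replicate OPT_replicate)
  then have "integrable M (\<lambda>\<sigma>. real (kendall m \<sigma> \<pi>))"
    by (intro integrable_measure_pmf_finite) (auto intro: finite_subset[OF _ finite_rankings])
  then have "measure_pmf.prob M {\<sigma>. d \<le> real (kendall m \<sigma> \<pi>)}
      \<le> measure_pmf.expectation M (\<lambda>\<sigma>. real (kendall m \<sigma> \<pi>)) / d"
    using integral_Markov_inequality_measure[of M _ UNIV d] \<open>d > 0\<close> by simp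
  also have "\<dots> \<le> 1/2"
    using expectation \<open>d > 0\<close> by (simp add: divide_simps)
  finally have "measure_pmf.prob M (- {\<sigma>. real (kendall m \<sigma> \<pi>) \<le> d}) \<le> 1/2"
    by (rule order_trans[rotated], intro measure_pmf.finite_measure_mono) auto
  then show ?thesis
    using measure_pmf.prob_compl[of "{\<sigma>. real (kendall m \<sigma> \<pi>) \<le> d}" M]
    by (simp add: M_def d_def Compl_eq_Diff_UNIV)
qed

lemma DP_group_privacy:
  assumes DP: "is_DP m n \<epsilon> A" and "\<epsilon> \<ge> 0"
    and Ps: "valid_input m n Ps" and Ps': "valid_input m n Ps'"
  shows "measure_pmf.prob (A Ps) S \<le> exp (real n * \<epsilon>) * measure_pmf.prob (A Ps') S"
proof -
  define H where "H i = map (\<lambda>k. if k < i then Ps' ! k else Ps ! k) [0..<n]" for i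
  have valid: "valid_input m n (H i)" for i
    using Ps Ps' by (auto simp: H_def valid_input_def)
  have neighboring: "neighboring (H i) (H (Suc i))" for i
  proof -
    have "{k. k < length (H i) \<and> H i ! k \<noteq> H (Suc i) ! k} \<subseteq> {i}"
      by (auto simp: H_def)
    then have "card {k. k < length (H i) \<and> H i ! k \<noteq> H (Suc i) ! k} \<le> card {i}"
      by (rule card_mono[rotated]) simp
    then show ?thesis by (simp add: neighboring_def H_def)
  qed
  have hybrid: "measure_pmf.prob (A (H 0)) S \<le> exp (real i * \<epsilon>) * measure_pmf.prob (A (H i)) S" for i
  proof (induction i)
    case (Suc i)
    have "measure_pmf.prob (A (H i)) S \<le> exp \<epsilon> * measure_pmf.prob (A (H (Suc i))) S"
      using DP valid neighboring unfolding is_DP_def by blast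
    then have "exp (real i * \<epsilon>) * measure_pmf.prob (A (H i)) S
        \<le> exp (real (Suc i) * \<epsilon>) * measure_pmf.prob (A (H (Suc i))) S"
      by (simp add: distrib_right exp_add mult.assoc)
    with Suc.IH show ?case by linarith
  qed simp
  have "H 0 = Ps" "H n = Ps'"
    using Ps Ps' by (auto simp: H_def valid_input_def intro!: nth_equalityI)
  with hybrid[of n] show ?thesis by simp
qed

lemma sum_prob_le_of_overlap_bound:
  fixes M :: "'a pmf" and E :: "'i \<Rightarrow> 'a set"
  assumes "finite I"
    and overlap: "\<And>x. x \<in> set_pmf M \<Longrightarrow> real (card {i\<in>I. x \<in> E i}) \<le> B"
  shows "(\<Sum>i\<in>I. measure_pmf.prob M (E i)) \<le> B"
proof -
  have count: "(\<Sum>i\<in>I. indicator (E i) x) = real (card {i\<in>I. x \<in> E i})" for x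
    using \<open>finite I\<close> by (simp add: indicator_def of_bool_def[symmetric] Int_def)
  have "(\<Sum>i\<in>I. measure_pmf.prob M (E i)) = (\<Sum>i\<in>I. measure_pmf.expectation M (indicator (E i)))"
    by simp
  also have "\<dots> = measure_pmf.expectation M (\<lambda>x. \<Sum>i\<in>I. indicator (E i) x)"
    by (rule Bochner_Integration.integral_sum[symmetric]) (simp add: less_top[symmetric])
  also have "\<dots> \<le> B"
    unfolding count
  proof (rule measure_pmf.integral_le_const)
    show "AE x in M. real (card {i\<in>I. x \<in> E i}) \<le> B"
      using overlap by (simp add: AE_measure_pmf_iff)
    show "integrable M (\<lambda>x. real (card {i\<in>I. x \<in> E i}))"
      unfolding count[symmetric]
      by (intro Bochner_Integration.integrable_sum) (simp add: less_top[symmetric])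
  qed
  finally show ?thesis .
qed

lemma sum_Pow_power_card:
  fixes x :: "'a :: comm_semiring_1"
  assumes "finite P"
  shows "(\<Sum>U\<in>Pow P. x ^ card U) = (1 + x) ^ card P"
  using prod_add[OF assms, of "\<lambda>_. x" "\<lambda>_. 1"] by (simp add: add.commute)

lemma card_sym_diff_ball_le:
  fixes r :: real
  assumes "finite P" "T \<subseteq> P"
  shows "real (card {S\<in>Pow P. real (card (sym_diff S T)) \<le> r}) \<le> 3 powr r * (4/3) ^ card P"
proof -
  \<comment> \<open>Chernoff-style: dominate the indicator by the weight \<open>3 powr (r - card (sym_diff S T))\<close>.\<close>
  have point: "of_bool (real (card (sym_diff S T)) \<le> r) \<le> 3 powr r * (1/3) ^ card (sym_diff S T)" for S
  proof (cases "real (card (sym_diff S T)) \<le> r")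
    case True
    then have "3 ^ card (sym_diff S T) \<le> 3 powr r"
      by (metis powr_mono powr_realpow one_le_numeral zero_less_numeral)
    then show ?thesis by (simp add: power_one_over field_simps)
  qed simp
  have "real (card {S\<in>Pow P. real (card (sym_diff S T)) \<le> r})
      = (\<Sum>S\<in>Pow P. of_bool (real (card (sym_diff S T)) \<le> r))"
    using \<open>finite P\<close> by (simp add: Int_def)
  also have "\<dots> \<le> (\<Sum>S\<in>Pow P. 3 powr r * (1/3) ^ card (sym_diff S T))"
    by (rule sum_mono) (rule point)
  also have "\<dots> = 3 powr r * (\<Sum>U\<in>Pow P. (1/3) ^ card U)"
    unfolding sum_distrib_left[symmetric]
    by (rule arg_cong, rule sum.reindex_bij_witness[where i = "\<lambda>U. sym_diff U T" and j = "\<lambda>U. sym_diff U T"])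
       (use \<open>T \<subseteq> P\<close> in auto)
  also have "\<dots> = 3 powr r * (4/3) ^ card P"
    using sum_Pow_power_card[OF \<open>finite P\<close>, of "1/3 :: real"] by simp
  finally show ?thesis .
qed

lemma exists_ranking_ordered_by:
  fixes g :: "nat \<Rightarrow> 'a :: linorder"
  assumes inj: "inj_on g {1..m}"
  shows "\<exists>\<pi>\<in>rankings m. \<forall>i\<in>{1..m}. \<forall>j\<in>{1..m}. g i < g j \<longrightarrow> \<pi> i < \<pi> j"
proof -
  define \<pi> where "\<pi> i = (if i \<in> {1..m} then card {j\<in>{1..m}. g j < g i} + 1 else i)" for i
  have mono: "\<pi> i < \<pi> j" if "i \<in> {1..m}" "j \<in> {1..m}" "g i < g j" for i j
  proof -
    have "{k\<in>{1..m}. g k < g i} \<subset> {k\<in>{1..m}. g k < g j}"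
      using that by auto
    then have "card {k\<in>{1..m}. g k < g i} < card {k\<in>{1..m}. g k < g j}"
      by (rule psubset_card_mono[rotated]) simp
    then show ?thesis using that by (simp add: \<pi>_def)
  qed
  have inj_\<pi>: "inj_on \<pi> {1..m}"
  proof (rule inj_onI)
    fix i j assume "i \<in> {1..m}" "j \<in> {1..m}" "\<pi> i = \<pi> j"
    then show "i = j" using mono[of i j] mono[of j i] inj_onD[OF inj, of i j]
      by (metis less_irrefl neq_iff)
  qed
  have "\<pi> ` {1..m} \<subseteq> {1..m}"
  proof
    fix x assume "x \<in> \<pi> ` {1..m}"
    then obtain i where i: "i \<in> {1..m}" "x = \<pi> i" by auto
    have "card {k\<in>{1..m}. g k < g i} \<le> card ({1..m} - {i})"
      by (intro card_mono) auto
    with i show "x \<in> {1..m}" by (auto simp: \<pi>_def)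
  qed
  with inj_\<pi> have "bij_betw \<pi> {1..m} {1..m}"
    by (simp add: bij_betw_def endo_inj_surj)
  then have "\<pi> permutes {1..m}"
    by (rule bij_imp_permutes) (auto simp: \<pi>_def)
  with mono show ?thesis unfolding rankings_def by blast
qed

definition planted_score :: "nat \<Rightarrow> nat set \<Rightarrow> nat \<Rightarrow> nat" where
  "planted_score m S i = (if i \<le> m div 2 then (if i \<in> S then 2 * m + i else i) else m + i)"

definition planted_ranking :: "nat \<Rightarrow> nat set \<Rightarrow> nat \<Rightarrow> nat" where
  "planted_ranking m S = (SOME \<pi>. \<pi> \<in> rankings m \<and>
     (\<forall>i\<in>{1..m}. \<forall>j\<in>{1..m}. planted_score m S i < planted_score m S j \<longrightarrow> \<pi> i < \<pi> j))"

lemma planted_ranking_spec: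
  "planted_ranking m S \<in> rankings m \<and>
   (\<forall>i\<in>{1..m}. \<forall>j\<in>{1..m}. planted_score m S i < planted_score m S j \<longrightarrow>
      planted_ranking m S i < planted_ranking m S j)"
proof -
  have "inj_on (planted_score m S) {1..m}"
    unfolding inj_on_def planted_score_def by (auto split: if_splits)
  then have "\<exists>\<pi>. \<pi> \<in> rankings m \<and>
      (\<forall>i\<in>{1..m}. \<forall>j\<in>{1..m}. planted_score m S i < planted_score m S j \<longrightarrow> \<pi> i < \<pi> j)"
    by (meson exists_ranking_ordered_by)
  then show ?thesis
    unfolding planted_ranking_def by (rule someI_ex)
qed

lemma planted_ranking_in_rankings: "planted_ranking m S \<in> rankings m"
  using planted_ranking_spec by blast

lemma planted_ranking_behind:
  assumes "j \<in> {1..m div 2}" "f \<in> {m div 2 + 1..m}" "j \<in> S"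
  shows "planted_ranking m S f < planted_ranking m S j"
  using planted_ranking_spec[of m S] assms by (auto simp: planted_score_def)

lemma planted_ranking_ahead:
  assumes "j \<in> {1..m div 2}" "f \<in> {m div 2 + 1..m}" "j \<notin> S"
  shows "planted_ranking m S j < planted_ranking m S f"
  using planted_ranking_spec[of m S] assms by (auto simp: planted_score_def)

definition discordant :: "(nat \<Rightarrow> nat) \<Rightarrow> (nat \<Rightarrow> nat) \<Rightarrow> nat \<Rightarrow> nat \<Rightarrow> bool" where
  "discordant \<sigma> \<pi> i j \<longleftrightarrow> (\<sigma> i < \<sigma> j \<and> \<pi> j < \<pi> i) \<or> (\<sigma> j < \<sigma> i \<and> \<pi> i < \<pi> j)"

lemma sum_discordant_le_kendall:
  assumes "J \<subseteq> {1..m}" "F \<subseteq> {1..m}" "J \<inter> F = {}"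
  shows "(\<Sum>j\<in>J. card {f\<in>F. discordant \<sigma> \<pi> j f}) \<le> kendall m \<sigma> \<pi>"
proof -
  define orient where "orient = (\<lambda>(j, f). if \<sigma> j < \<sigma> f then (j, f) else (f, j))"
  have fin: "finite J" "finite F"
    using assms(1,2) by (auto intro: finite_subset)
  have "(\<Sum>j\<in>J. card {f\<in>F. discordant \<sigma> \<pi> j f}) = card (SIGMA j:J. {f\<in>F. discordant \<sigma> \<pi> j f})"
    using fin by (simp add: card_SigmaI)
  also have "\<dots> \<le> card {(i, j). i \<in> {1..m} \<and> j \<in> {1..m} \<and> \<sigma> i < \<sigma> j \<and> \<pi> i > \<pi> j}"
  proof (rule card_inj_on_le[of orient])
    show "inj_on orient (SIGMA j:J. {f\<in>F. discordant \<sigma> \<pi> j f})"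
    proof (rule inj_onI, clarify)
      fix j f j' f' assume "j \<in> J" "f \<in> F" "j' \<in> J" "f' \<in> F" "orient (j, f) = orient (j', f')"
      with assms(3) show "j = j' \<and> f = f'"
        unfolding orient_def by (simp split: if_splits) blast+
    qed
    show "orient ` (SIGMA j:J. {f\<in>F. discordant \<sigma> \<pi> j f})
        \<subseteq> {(i, j). i \<in> {1..m} \<and> j \<in> {1..m} \<and> \<sigma> i < \<sigma> j \<and> \<pi> i > \<pi> j}"
      using assms(1,2) by (auto simp: orient_def discordant_def)
    show "finite {(i, j). i \<in> {1..m} \<and> j \<in> {1..m} \<and> \<sigma> i < \<sigma> j \<and> \<pi> i > \<pi> j}"
      by (rule finite_subset[of _ "{1..m} \<times> {1..m}"]) auto
  qed
  finally show ?thesis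
    by (simp add: kendall_def)
qed

(* The guess for S read off sigma: the first-half items that sigma ranks ahead of at most half
   of the second half. *)
definition decoded_set :: "nat \<Rightarrow> (nat \<Rightarrow> nat) \<Rightarrow> nat set" where
  "decoded_set m \<sigma> = {j\<in>{1..m div 2}. 2 * card {f\<in>{m div 2 + 1..m}. \<sigma> j < \<sigma> f} \<le> m - m div 2}"

lemma decoded_set_subset: "decoded_set m \<sigma> \<subseteq> {1..m div 2}"
  by (auto simp: decoded_set_def)

lemma discordant_with_second_half_ge:
  assumes "\<sigma> \<in> rankings m" and j: "j \<in> {1..m div 2}" "j \<in> sym_diff S (decoded_set m \<sigma>)"
  shows "m - m div 2 \<le> 2 * card {f\<in>{m div 2 + 1..m}. discordant \<sigma> (planted_ranking m S) j f}"
proof -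
  define F where "F = {m div 2 + 1..m}"
  define \<pi> where "\<pi> = planted_ranking m S"
  define ahead where "ahead = {f\<in>F. \<sigma> j < \<sigma> f}"
  define behind where "behind = {f\<in>F. \<sigma> f < \<sigma> j}"
  have "F \<subseteq> ahead \<union> behind"
  proof
    fix f assume "f \<in> F"
    with j(1) have "f \<noteq> j"
      by (auto simp: F_def)
    then have "\<sigma> f \<noteq> \<sigma> j"
      using inj_of_in_rankings[OF \<open>\<sigma> \<in> rankings m\<close>] by (auto dest: injD)
    with \<open>f \<in> F\<close> show "f \<in> ahead \<union> behind"
      by (auto simp: ahead_def behind_def)
  qed
  then have "F = ahead \<union> behind" and "ahead \<inter> behind = {}"
    by (auto simp: ahead_def behind_def)
  then have card_split: "card ahead + card behind = m - m div 2"
    by (metis F_def card_Un_disjoint card_atLeastAtMost finite_Un finite_atLeastAtMost diff_Suc_Suc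
        Suc_eq_plus1)
  have decoded: "j \<in> decoded_set m \<sigma> \<longleftrightarrow> 2 * card ahead \<le> m - m div 2"
    using j(1) by (simp add: decoded_set_def ahead_def F_def)
  show ?thesis
    unfolding F_def[symmetric] \<pi>_def[symmetric]
  proof (cases "j \<in> S")
    case True
    then have "\<pi> f < \<pi> j" if "f \<in> F" for f
      using planted_ranking_behind[OF j(1)] that by (simp add: F_def \<pi>_def)
    then have "{f\<in>F. discordant \<sigma> \<pi> j f} = ahead"
      by (fastforce simp: ahead_def discordant_def)
    with True j(2) decoded show "m - m div 2 \<le> 2 * card {f\<in>F. discordant \<sigma> \<pi> j f}"
      by simp
  next
    case False
    then have "\<pi> j < \<pi> f" if "f \<in> F" for f
      using planted_ranking_ahead[OF j(1)] that by (simp add: F_def \<pi>_def)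
    then have "{f\<in>F. discordant \<sigma> \<pi> j f} = behind"
      by (fastforce simp: behind_def discordant_def)
    with False j(2) decoded card_split show "m - m div 2 \<le> 2 * card {f\<in>F. discordant \<sigma> \<pi> j f}"
      by simp
  qed
qed

lemma kendall_planted_ranking_ge:
  assumes "\<sigma> \<in> rankings m" "S \<subseteq> {1..m div 2}"
  shows "card (sym_diff S (decoded_set m \<sigma>)) * (m - m div 2)
    \<le> 2 * kendall m \<sigma> (planted_ranking m S)"
proof -
  define D where "D = sym_diff S (decoded_set m \<sigma>)"
  have D: "D \<subseteq> {1..m div 2}"
    using assms(2) decoded_set_subset by (auto simp: D_def)
  have "card D * (m - m div 2) = (\<Sum>j\<in>D. m - m div 2)"
    by simp
  also have "\<dots> \<le> (\<Sum>j\<in>D. 2 * card {f\<in>{m div 2 + 1..m}. discordant \<sigma> (planted_ranking m S) j f})"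
    using D by (intro sum_mono discordant_with_second_half_ge[OF assms(1)]) (auto simp: D_def)
  also have "\<dots> \<le> 2 * kendall m \<sigma> (planted_ranking m S)"
    unfolding sum_distrib_left[symmetric] using D
    by (intro mult_left_mono sum_discordant_le_kendall order.trans[OF D]) auto
  finally show ?thesis
    by (simp add: D_def)
qed

lemma card_planted_rankings_near_le:
  assumes "\<sigma> \<in> rankings m" "m \<ge> 1"
  shows "real (card {S\<in>Pow {1..m div 2}. real (kendall m \<sigma> (planted_ranking m S)) \<le> 0.02 * real m ^ 2})
    \<le> 3 powr (0.08 * real m) * (4/3) ^ (m div 2)"
proof -
  define T where "T = decoded_set m \<sigma>"
  have "{S\<in>Pow {1..m div 2}. real (kendall m \<sigma> (planted_ranking m S)) \<le> 0.02 * real m ^ 2}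
      \<subseteq> {S\<in>Pow {1..m div 2}. real (card (sym_diff S T)) \<le> 0.08 * real m}"
  proof safe
    fix S assume S: "S \<subseteq> {1..m div 2}"
      and near: "real (kendall m \<sigma> (planted_ranking m S)) \<le> 0.02 * real m ^ 2"
    define c where "c = real (card (sym_diff S T))"
    have "c * real m \<le> c * (2 * real (m - m div 2))"
      by (intro mult_left_mono) (linarith, simp add: c_def)
    also have "\<dots> = 2 * real (card (sym_diff S T) * (m - m div 2))"
      by (simp add: c_def)
    also have "\<dots> \<le> 4 * real (kendall m \<sigma> (planted_ranking m S))"
    proof -
      have "real (card (sym_diff S T) * (m - m div 2)) \<le> real (2 * kendall m \<sigma> (planted_ranking m S))"
        unfolding of_nat_le_iff T_def by (rule kendall_planted_ranking_ge[OF assms(1) S])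
      then show ?thesis
        by (simp only: of_nat_mult of_nat_numeral)
    qed
    also have "\<dots> \<le> (0.08 * real m) * real m"
      using near by (simp add: power2_eq_square)
    finally show "c \<le> 0.08 * real m"
      using \<open>m \<ge> 1\<close> by (simp add: mult_le_cancel_right)
  qed
  then have "card {S\<in>Pow {1..m div 2}. real (kendall m \<sigma> (planted_ranking m S)) \<le> 0.02 * real m ^ 2}
      \<le> card {S\<in>Pow {1..m div 2}. real (card (sym_diff S T)) \<le> 0.08 * real m}"
    by (intro card_mono) auto
  also have "real \<dots> \<le> 3 powr (0.08 * real m) * (4/3) ^ (m div 2)"
    using card_sym_diff_ball_le[of "{1..m div 2}" T "0.08 * real m"] decoded_set_subset
    by (simp add: T_def)
  finally show ?thesis
    by simp
qed

lemma DP_approx_packing_inequality: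
  assumes "m \<ge> 1" "n \<ge> 1" "\<epsilon> \<ge> 0"
    and DP: "is_DP m n \<epsilon> A" and approx: "is_approx m n \<alpha> (0.01 * real m ^ 2) A"
  shows "2 ^ (m div 2) / 2 \<le> exp (real n * \<epsilon>) * (3 powr (0.08 * real m) * (4/3) ^ (m div 2))"
proof -
  define P where "P = Pow {1..m div 2}"
  define near where "near S = {\<sigma>. real (kendall m \<sigma> (planted_ranking m S)) \<le> 0.02 * real m ^ 2}" for S
  define M where "M = A (replicate n id)"
  have valid: "valid_input m n (replicate n \<pi>)" if "\<pi> \<in> rankings m" for \<pi>
    using that by (simp add: valid_input_def set_replicate_conv_if)
  have support: "set_pmf M \<subseteq> rankings m"
    using approx valid[OF id_in_rankings] by (simp add: is_approx_def M_def)
  have near_whp: "1/2 \<le> exp (real n * \<epsilon>) * measure_pmf.prob M (near S)" for S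
  proof -
    have "1/2 \<le> measure_pmf.prob (A (replicate n (planted_ranking m S))) (near S)"
      unfolding near_def using approx \<open>n \<ge> 1\<close> planted_ranking_in_rankings \<open>m \<ge> 1\<close>
      by (rule approx_concentrates_near_unanimous_input)
    also have "\<dots> \<le> exp (real n * \<epsilon>) * measure_pmf.prob M (near S)"
      unfolding M_def using DP \<open>\<epsilon> \<ge> 0\<close> valid[OF planted_ranking_in_rankings] valid[OF id_in_rankings]
      by (rule DP_group_privacy)
    finally show ?thesis .
  qed
  have "2 ^ (m div 2) / 2 = (\<Sum>S\<in>P. 1/2 :: real)"
    by (simp add: P_def card_Pow)
  also have "\<dots> \<le> (\<Sum>S\<in>P. exp (real n * \<epsilon>) * measure_pmf.prob M (near S))"
    by (rule sum_mono) (rule near_whp)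
  also have "\<dots> = exp (real n * \<epsilon>) * (\<Sum>S\<in>P. measure_pmf.prob M (near S))"
    by (simp add: sum_distrib_left)
  also have "\<dots> \<le> exp (real n * \<epsilon>) * (3 powr (0.08 * real m) * (4/3) ^ (m div 2))"
  proof (rule mult_left_mono[OF sum_prob_le_of_overlap_bound])
    fix \<sigma> assume "\<sigma> \<in> set_pmf M"
    with support \<open>m \<ge> 1\<close> show "real (card {S\<in>P. \<sigma> \<in> near S}) \<le> 3 powr (0.08 * real m) * (4/3) ^ (m div 2)"
      using card_planted_rankings_near_le by (auto simp: P_def near_def)
  qed (simp_all add: P_def)
  finally show ?thesis .
qed

lemma packing_inequality_imp_linear_bound:
  fixes x :: real
  assumes packing: "2 ^ p / 2 \<le> exp x * (3 powr (0.08 * real m) * (4/3) ^ p)"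
    and "m \<ge> 2" "real m \<le> 2 * real p + 1"
  shows "real m / 40 \<le> x + 2"
proof -
  define a where "a = ln (2 :: real)"
  define b where "b = ln (3/2 :: real)"
  have "ln (2 ^ p / 2) \<le> ln (exp x * (3 powr (0.08 * real m) * (4/3) ^ p))"
    using packing by (subst ln_le_cancel_iff) auto
  then have "real p * ln 2 - ln 2 \<le> x + 0.08 * real m * ln 3 + real p * ln (4/3)"
    by (simp add: ln_mult ln_div ln_powr ln_realpow)
  moreover have "ln (3 :: real) = a + b" "ln (4/3 :: real) = a - b"
    using ln_mult[of 2 "3/2"] ln_div[of 2 "3/2"] by (simp_all add: a_def b_def)
  ultimately have "(real p - 0.08 * real m) * b \<le> a + x + 0.08 * real m * a"
    by (simp add: a_def algebra_simps add_divide_distrib)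
  moreover have "1/4 \<le> b"
    using ln_one_plus_pos_lower_bound[of "1/2"] by (simp add: b_def power2_eq_square)
  moreover have "0 \<le> real p - 0.08 * real m"
    using assms(2,3) by simp
  ultimately have "(real p - 0.08 * real m) / 4 \<le> a + x + 0.08 * real m * a"
    using mult_left_mono[of "1/4" b "real p - 0.08 * real m"] by simp
  moreover have "a < 1"
    using ln_2_less_1 by (simp add: a_def)
  moreover have "0.08 * real m * a \<le> 0.08 * real m"
    using \<open>a < 1\<close> by (intro mult_left_le) auto
  ultimately have "(real p - 0.08 * real m) / 4 \<le> 1 + x + 0.08 * real m"
    by linarith
  with assms(3) show ?thesis
    by simp
qed

lemma DP_approx_lower_bound:
  assumes "m \<ge> 2" "n \<ge> 1" "\<epsilon> \<ge> 0" "is_DP m n \<epsilon> A" "is_approx m n \<alpha> (0.01 * real m ^ 2) A"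
  shows "real m / 40 \<le> real n * \<epsilon> + 2"
proof (rule packing_inequality_imp_linear_bound)
  show "2 ^ (m div 2) / 2 \<le> exp (real n * \<epsilon>) * (3 powr (0.08 * real m) * (4/3) ^ (m div 2))"
    using assms by (intro DP_approx_packing_inequality) auto
qed (use assms(1) in linarith)+

theorem theorem5:
  fixes \<alpha> \<epsilon> :: real
  assumes "\<alpha> > 0" and "\<epsilon> > 0"
  shows "\<forall>ms ns :: nat \<Rightarrow> nat.
           filterlim ms at_top sequentially \<longrightarrow>
           (\<forall>k. ns k \<ge> 1) \<longrightarrow>
           ((\<lambda>k. real (ns k) / (real (ms k) / \<epsilon>)) \<longlonglongrightarrow> 0) \<longrightarrow>
           (\<forall>\<^sub>F k in sequentially.
              \<not> (\<exists>A. is_DP (ms k) (ns k) \<epsilon> A \<and>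
                     is_approx (ms k) (ns k) \<alpha> (0.01 * real (ms k) ^ 2) A))"
proof (intro allI impI)
  fix ms ns :: "nat \<Rightarrow> nat"
  assume "filterlim ms at_top sequentially" and ns: "\<forall>k. ns k \<ge> 1"
    and ratio: "(\<lambda>k. real (ns k) / (real (ms k) / \<epsilon>)) \<longlonglongrightarrow> 0"
  have "\<forall>\<^sub>F k in sequentially. ms k \<ge> 200"
    using \<open>filterlim ms at_top sequentially\<close> by (simp add: filterlim_at_top)
  moreover have "\<forall>\<^sub>F k in sequentially. real (ns k) / (real (ms k) / \<epsilon>) < 0.01"
    using order_tendstoD(2)[OF ratio, of "0.01"] by simp
  ultimately show "\<forall>\<^sub>F k in sequentially.
      \<not> (\<exists>A. is_DP (ms k) (ns k) \<epsilon> A \<and> is_approx (ms k) (ns k) \<alpha> (0.01 * real (ms k) ^ 2) A)"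
  proof eventually_elim
    case (elim k)
    then have "real (ns k) * \<epsilon> < 0.01 * real (ms k)"
      by (simp add: field_simps)
    with elim(1) ns \<open>\<epsilon> > 0\<close> show ?case
      using DP_approx_lower_bound[of "ms k" "ns k" \<epsilon>] by force
  qed
qed

end
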